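(* Let $n\geq 2$ be an integer and let $m\neq\pm1$ be a square-free integer. Let $\sqrt[n]{m}$ denote a root of $X^n-m$. Then every algebraic integer in $\mathbb{Q}(\sqrt[n]{m})$ can be written in the basis $(1,\sqrt[n]{m},\ldots,\sqrt[n]{m^{n-1}})$ with rational coefficients having a denominator $d$ satisfying $\gcd(d,m)=1$.
   Context: Here $\sqrt[n]{m^{j}}$ means $(\sqrt[n]{m})^{j}$. Since $m$ is square-free and $m\neq\pm1$, $X^n-m$ is irreducible over $\mathbb{Q}$, so $(1,\sqrt[n]{m},\ldots,\sqrt[n]{m^{n-1}})$ is a $\mathbb{Q}$-basis of $\mathbb{Q}(\sqrt[n]{m})$. *)

theory Defs
  imports Complex_Main "HOL-Computational_Algebra.Computational_Algebra"
begin

text \<open>The field \<open>\<rat>(a)\<close> inside \<open>\<complex>\<close>: the smallest subfield of \<open>\<complex>\<close> containing \<open>a\<close>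
  (every subfield contains \<open>\<rat>\<close>).\<close>
definition subfield_complex :: "complex set \<Rightarrow> bool" where
  "subfield_complex K \<longleftrightarrow> 0 \<in> K \<and> 1 \<in> K \<and>
     (\<forall>x\<in>K. \<forall>y\<in>K. x + y \<in> K \<and> x - y \<in> K \<and> x * y \<in> K) \<and>
     (\<forall>x\<in>K. x \<noteq> 0 \<longrightarrow> inverse x \<in> K)"

definition rat_adjoin :: "complex \<Rightarrow> complex set" where
  "rat_adjoin a = \<Inter> {K. subfield_complex K \<and> a \<in> K}"

end

theory Submission
  imports Defs "HOL-Computational_Algebra.Field_as_Ring" "Jordan_Normal_Form.Char_Poly"
begin

text \<open>Write \<open>x \<in> \<rat>(\<alpha>)\<close> as a polynomial of degree \<open>< n\<close> in \<open>\<alpha>\<close> and clear denominators: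
  \<open>x = \<Sum> (c\<^sub>i / d) \<alpha>\<^sup>i\<close>. If a prime \<open>p\<close> divides \<open>d\<close> and \<open>m\<close>, then \<open>(d / p) x = \<Sum> (c\<^sub>i / p) \<alpha>\<^sup>i\<close>
  is an algebraic integer. By induction on \<open>j\<close>, \<open>p | c\<^sub>j\<close>: multiplying by \<open>\<alpha>\<^bsup>n-1-j\<^esup>\<close> makes
  every other term integral (the earlier ones since \<open>p | c\<^sub>i\<close>, the later ones since \<open>\<alpha>\<^sup>n = m\<close>
  supplies a factor \<open>p\<close>), so \<open>t = (c\<^sub>j / p) \<alpha>\<^bsup>n-1\<^esup>\<close> is an algebraic integer; then
  \<open>t\<^sup>n = c\<^sub>j\<^sup>n m\<^bsup>n-1\<^esup> / p\<^sup>n\<close> is a rational integer, which forces \<open>p | c\<^sub>j\<close> because \<open>p\<^sup>2 \<nmid> m\<close>.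
  Hence \<open>p\<close> cancels from \<open>d\<close>, and descent on \<open>d\<close> ends with \<open>d\<close> coprime to \<open>m\<close>.\<close>

definition zspan :: "'a::comm_ring_1 list \<Rightarrow> 'a set" where
  "zspan gs = {u. \<exists>c :: nat \<Rightarrow> int. u = (\<Sum>i<length gs. of_int (c i) * gs ! i)}"

lemma zspanI: "u = (\<Sum>i<length gs. of_int (c i) * gs ! i) \<Longrightarrow> u \<in> zspan gs"
  unfolding zspan_def by blast

lemma zspanE:
  assumes "u \<in> zspan gs"
  obtains c where "u = (\<Sum>i<length gs. of_int (c i) * gs ! i)"
  using assms unfolding zspan_def by blast

lemma zspan_0 [simp]: "0 \<in> zspan gs"
  by (rule zspanI[of _ "\<lambda>_. 0"]) simp

lemma zspan_add:
  assumes "u \<in> zspan gs" "v \<in> zspan gs"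
  shows "u + v \<in> zspan gs"
proof -
  from assms obtain a b where "u = (\<Sum>i<length gs. of_int (a i) * gs ! i)"
    "v = (\<Sum>i<length gs. of_int (b i) * gs ! i)" by (elim zspanE)
  then have "u + v = (\<Sum>i<length gs. of_int (a i + b i) * gs ! i)"
    by (simp add: sum.distrib[symmetric] distrib_right)
  then show ?thesis by (rule zspanI)
qed

lemma zspan_of_int_mult:
  assumes "u \<in> zspan gs"
  shows "of_int k * u \<in> zspan gs"
proof -
  from assms obtain a where "u = (\<Sum>i<length gs. of_int (a i) * gs ! i)"
    by (rule zspanE)
  then have "of_int k * u = (\<Sum>i<length gs. of_int (k * a i) * gs ! i)"
    by (simp add: sum_distrib_left mult.assoc)
  then show ?thesis by (rule zspanI)
qed

lemma zspan_sum: "(\<And>i. i \<in> A \<Longrightarrow> f i \<in> zspan gs) \<Longrightarrow> sum f A \<in> zspan gs"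
  by (induction A rule: infinite_finite_induct) (auto intro: zspan_add)

lemma set_subset_zspan: "set gs \<subseteq> zspan gs"
proof
  fix g assume "g \<in> set gs"
  then obtain j where j: "j < length gs" "g = gs ! j" by (auto simp: in_set_conv_nth)
  then have "g = (\<Sum>i<length gs. of_int (if i = j then 1 else 0) * gs ! i)"
    by (simp add: if_distrib if_distribR cong: if_cong)
  then show "g \<in> zspan gs" by (rule zspanI)
qed

lemma zspan_mult:
  assumes "u \<in> zspan gs" "v \<in> zspan hs"
  shows "u * v \<in> zspan [g * h. g \<leftarrow> gs, h \<leftarrow> hs]"
proof -
  from assms obtain a b where
    "u = (\<Sum>i<length gs. of_int (a i) * gs ! i)" "v = (\<Sum>j<length hs. of_int (b j) * hs ! j)"
    by (elim zspanE)
  then have "u * v = (\<Sum>i<length gs. \<Sum>j<length hs. of_int (a i * b j) * (gs ! i * hs ! j))"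
    by (simp add: sum_product mult_ac)
  also have "\<dots> \<in> zspan [g * h. g \<leftarrow> gs, h \<leftarrow> hs]"
  proof (intro zspan_sum zspan_of_int_mult subsetD[OF set_subset_zspan])
    fix i j assume "i \<in> {..<length gs}" "j \<in> {..<length hs}"
    then show "gs ! i * hs ! j \<in> set [g * h. g \<leftarrow> gs, h \<leftarrow> hs]"
      by (auto intro!: bexI[of _ "gs ! i"])
  qed
  finally show ?thesis .
qed

text \<open>\<open>u\<close> is an eigenvalue of the integer matrix by which it acts on the generators,
  hence a root of that matrix's monic characteristic polynomial.\<close>

lemma algebraic_int_if_mult_closed_zspan:
  fixes u :: "'a::field_char_0"
  assumes nonzero: "g \<in> set gs" "g \<noteq> 0"
    and closed: "\<And>g. g \<in> set gs \<Longrightarrow> u * g \<in> zspan gs"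
  shows "algebraic_int u"
proof -
  define k where "k = length gs"
  have "\<forall>i<k. \<exists>c. u * gs ! i = (\<Sum>l<k. of_int (c l) * gs ! l)"
    using closed[OF nth_mem] unfolding k_def by (blast elim: zspanE)
  then obtain c where c: "\<And>i. i < k \<Longrightarrow> u * gs ! i = (\<Sum>l<k. of_int (c i l) * gs ! l)"
    by metis
  define A :: "int mat" where "A = mat k k (\<lambda>(i, l). c i l)"
  define v :: "'a vec" where "v = vec k (\<lambda>i. gs ! i)"
  have A: "A \<in> carrier_mat k k" and A': "(map_mat of_int A :: 'a mat) \<in> carrier_mat k k"
    unfolding A_def by auto
  have "map_mat of_int A *\<^sub>v v = u \<cdot>\<^sub>v v"
    by (rule eq_vecI)
      (simp_all add: A_def v_def c mult_mat_vec_def scalar_prod_def atLeast0LessThan)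
  moreover have "v \<noteq> 0\<^sub>v k"
  proof
    assume "v = 0\<^sub>v k"
    from nonzero obtain i where "i < k" "gs ! i \<noteq> 0"
      unfolding k_def by (auto simp: in_set_conv_nth)
    with \<open>v = 0\<^sub>v k\<close> show False unfolding v_def by (metis index_vec index_zero_vec(1))
  qed
  ultimately have "eigenvalue (map_mat of_int A) u"
    unfolding eigenvalue_def eigenvector_def using A' by (intro exI[of _ v]) (auto simp: v_def)
  then have "poly (of_int_poly (char_poly A)) u = 0"
    using eigenvalue_root_char_poly[OF A'] by (simp flip: of_int_hom.char_poly_hom[OF A])
  moreover have "monic (char_poly A)" using degree_monic_char_poly[OF A] by simp
  ultimately show ?thesis unfolding algebraic_int_altdef_ipoly by blast
qed

lemma algebraic_int_powers_in_zspan: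
  fixes x :: "'a::field_char_0"
  assumes "algebraic_int x"
  obtains D where "D > 0" "\<And>k. x ^ k \<in> zspan (map ((^) x) [0..<D])"
proof -
  obtain q where q: "poly (of_int_poly q) x = 0" "monic q"
    using assms algebraic_int_altdef_ipoly by blast
  define D where "D = degree q"
  have "D > 0"
  proof (rule ccontr)
    assume "\<not> D > 0"
    then have "q = 1" using q(2) unfolding D_def by (simp add: monic_degree_0)
    then show False using q(1) by simp
  qed
  have "0 = (\<Sum>i\<le>D. of_int (coeff q i) * x ^ i)"
    using q(1) unfolding D_def by (simp add: poly_altdef)
  also have "\<dots> = (\<Sum>i<D. of_int (coeff q i) * x ^ i) + x ^ D"
    using q(2) unfolding D_def by (simp add: lessThan_Suc_atMost[symmetric])
  finally have xD: "x ^ D = (\<Sum>i<D. of_int (- coeff q i) * x ^ i)"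
    by (simp add: sum_negf eq_neg_iff_add_eq_0 add.commute)
  have "x ^ k \<in> zspan (map ((^) x) [0..<D])" for k
  proof (induction k rule: less_induct)
    case (less k)
    show ?case
    proof (cases "k < D")
      case True
      then show ?thesis by (intro subsetD[OF set_subset_zspan]) auto
    next
      case False
      then have "x ^ k = x ^ (k - D) * x ^ D" by (simp flip: power_add)
      also have "\<dots> = (\<Sum>i<D. of_int (- coeff q i) * x ^ (k - D + i))"
        unfolding xD by (simp add: sum_distrib_left power_add mult_ac)
      also have "\<dots> \<in> zspan (map ((^) x) [0..<D])"
        using False by (intro zspan_sum zspan_of_int_mult less) auto
      finally show ?thesis .
    qed
  qed
  with \<open>D > 0\<close> show ?thesis by (rule that)
qed

lemma monomials_in_finite_zspan:
  fixes x y :: "'a::field_char_0"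
  assumes "algebraic_int x" "algebraic_int y"
  obtains gs where "1 \<in> set gs" "\<And>g. g \<in> set gs \<Longrightarrow> \<exists>a b. g = x ^ a * y ^ b"
    "\<And>a b. x ^ a * y ^ b \<in> zspan gs"
proof -
  obtain D where D: "D > 0" "\<And>a. x ^ a \<in> zspan (map ((^) x) [0..<D])"
    using algebraic_int_powers_in_zspan[OF assms(1)] by blast
  obtain E where E: "E > 0" "\<And>b. y ^ b \<in> zspan (map ((^) y) [0..<E])"
    using algebraic_int_powers_in_zspan[OF assms(2)] by blast
  define gs where "gs = [g * h. g \<leftarrow> map ((^) x) [0..<D], h \<leftarrow> map ((^) y) [0..<E]]"
  show ?thesis
  proof
    show "1 \<in> set gs" using D(1) E(1) unfolding gs_def by force
    show "\<exists>a b. g = x ^ a * y ^ b" if "g \<in> set gs" for g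
      using that unfolding gs_def by auto
    show "x ^ a * y ^ b \<in> zspan gs" for a b
      unfolding gs_def by (intro zspan_mult D E)
  qed
qed

lemma algebraic_int_plus [intro]:
  fixes x y :: "'a::field_char_0"
  assumes "algebraic_int x" "algebraic_int y"
  shows "algebraic_int (x + y)"
proof -
  obtain gs where gs: "1 \<in> set gs" "\<And>g. g \<in> set gs \<Longrightarrow> \<exists>a b. g = x ^ a * y ^ b"
    "\<And>a b. x ^ a * y ^ b \<in> zspan gs"
    using monomials_in_finite_zspan[OF assms] by blast
  show ?thesis
  proof (rule algebraic_int_if_mult_closed_zspan[OF gs(1) one_neq_zero])
    fix g assume "g \<in> set gs"
    then obtain a b where "g = x ^ a * y ^ b" using gs(2) by blast
    then have "(x + y) * g = x ^ Suc a * y ^ b + x ^ a * y ^ Suc b"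
      by (simp add: algebra_simps)
    also have "\<dots> \<in> zspan gs" by (intro zspan_add gs(3))
    finally show "(x + y) * g \<in> zspan gs" .
  qed
qed

lemma algebraic_int_times [intro]:
  fixes x y :: "'a::field_char_0"
  assumes "algebraic_int x" "algebraic_int y"
  shows "algebraic_int (x * y)"
proof -
  obtain gs where gs: "1 \<in> set gs" "\<And>g. g \<in> set gs \<Longrightarrow> \<exists>a b. g = x ^ a * y ^ b"
    "\<And>a b. x ^ a * y ^ b \<in> zspan gs"
    using monomials_in_finite_zspan[OF assms] by blast
  show ?thesis
  proof (rule algebraic_int_if_mult_closed_zspan[OF gs(1) one_neq_zero])
    fix g assume "g \<in> set gs"
    then obtain a b where "g = x ^ a * y ^ b" using gs(2) by blast
    then have "(x * y) * g = x ^ Suc a * y ^ Suc b"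
      by (simp add: algebra_simps)
    also have "\<dots> \<in> zspan gs" by (rule gs(3))
    finally show "(x * y) * g \<in> zspan gs" .
  qed
qed

lemma algebraic_int_diff [intro]:
  fixes x y :: "'a::field_char_0"
  shows "algebraic_int x \<Longrightarrow> algebraic_int y \<Longrightarrow> algebraic_int (x - y)"
  using algebraic_int_plus[of x "- y"] by simp

lemma algebraic_int_power [intro]:
  fixes x :: "'a::field_char_0"
  shows "algebraic_int x \<Longrightarrow> algebraic_int (x ^ k)"
  by (induction k) (simp_all add: algebraic_int_times)

lemma algebraic_int_sum [intro]:
  fixes f :: "'b \<Rightarrow> 'a::field_char_0"
  shows "(\<And>i. i \<in> A \<Longrightarrow> algebraic_int (f i)) \<Longrightarrow> algebraic_int (sum f A)"
  by (induction A rule: infinite_finite_induct) (simp_all add: algebraic_int_plus)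

interpretation of_rat_poly: map_poly_idom_hom "of_rat :: rat \<Rightarrow> 'a::field_char_0" ..

lemma rat_poly_root_prime_factor:
  fixes P :: "rat poly" and a :: "'a::field_char_0"
  assumes "P \<noteq> 0" "poly (map_poly of_rat P) a = 0"
  obtains f where "prime f" "f dvd P" "poly (map_poly of_rat f) a = 0"
proof -
  have "poly (map_poly of_rat P) a =
      poly (map_poly of_rat (unit_factor P * prod_mset (prime_factorization P))) a"
    by (simp only: prime_decomposition)
  also have "\<dots> = poly (map_poly of_rat (unit_factor P)) a *
      (\<Prod>f\<in>#prime_factorization P. poly (map_poly of_rat f) a)"
    by (simp only: of_rat_poly.hom_mult poly_mult of_rat_poly.hom_prod_mset poly_prod_mset)
  moreover have "poly (map_poly of_rat (unit_factor P)) a \<noteq> 0"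
    using assms(1) by (simp add: unit_factor_poly_def)
  ultimately obtain f where "f \<in> prime_factors P" "poly (map_poly of_rat f) a = 0"
    using assms(2) by (auto simp: prod_mset_zero_iff)
  then show ?thesis
    using that by (auto intro: in_prime_factors_imp_prime in_prime_factors_imp_dvd)
qed

lemma rat_poly_value_invertible:
  fixes P p :: "rat poly" and a :: "'a::field_char_0"
  assumes "P \<noteq> 0" "poly (map_poly of_rat P) a = 0" "poly (map_poly of_rat p) a \<noteq> 0"
  obtains q where "poly (map_poly of_rat q) a * poly (map_poly of_rat p) a = 1"
proof -
  obtain f where f: "prime f" "poly (map_poly of_rat f) a = 0"
    using rat_poly_root_prime_factor[OF assms(1,2)] by blast
  have "\<not> f dvd p" using f(2) assms(3) by (auto simp: hom_distribs elim!: dvdE)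
  then have "coprime f p" using f(1) by (simp add: prime_elem_imp_coprime)
  then have "fst (bezout_coefficients f p) * f + snd (bezout_coefficients f p) * p = 1"
    by (simp add: bezout_coefficients_fst_snd)
  then have "poly (map_poly of_rat (fst (bezout_coefficients f p) * f +
      snd (bezout_coefficients f p) * p)) a = 1"
    by simp
  then show ?thesis using f(2) that by (simp add: hom_distribs)
qed

lemma rat_adjoin_subset_rat_poly_values:
  fixes P :: "rat poly"
  assumes "P \<noteq> 0" "poly (map_poly of_rat P) a = 0"
  shows "rat_adjoin a \<subseteq> range (\<lambda>p. poly (map_poly of_rat p) a)"
proof -
  let ?K = "range (\<lambda>p. poly (map_poly of_rat p) a)"
  have "subfield_complex ?K"
    unfolding subfield_complex_def
  proof (intro conjI ballI impI)
    show "0 \<in> ?K" by (rule range_eqI[of _ _ 0]) simp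
    show "1 \<in> ?K" by (rule range_eqI[of _ _ 1]) simp
    fix x y assume "x \<in> ?K" "y \<in> ?K"
    then obtain p q where pq: "x = poly (map_poly of_rat p) a" "y = poly (map_poly of_rat q) a"
      by blast
    show "x + y \<in> ?K" by (rule range_eqI[of _ _ "p + q"]) (simp add: pq hom_distribs)
    show "x - y \<in> ?K" by (rule range_eqI[of _ _ "p - q"]) (simp add: pq hom_distribs)
    show "x * y \<in> ?K" by (rule range_eqI[of _ _ "p * q"]) (simp add: pq hom_distribs)
  next
    fix x assume "x \<in> ?K" "x \<noteq> 0"
    then obtain p where p: "x = poly (map_poly of_rat p) a" by blast
    with \<open>x \<noteq> 0\<close> obtain q where "poly (map_poly of_rat q) a * x = 1"
      using rat_poly_value_invertible[OF assms] by metis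
    then have "inverse x = poly (map_poly of_rat q) a" by (simp add: inverse_unique mult.commute)
    then show "inverse x \<in> ?K" by simp
  qed
  moreover have "a \<in> ?K" by (rule range_eqI[of _ _ "[:0, 1:]"]) (simp add: hom_distribs)
  ultimately show ?thesis unfolding rat_adjoin_def by blast
qed

lemma rat_adjoin_coordinates:
  fixes P :: "rat poly"
  assumes "P \<noteq> 0" "poly (map_poly of_rat P) a = 0" "x \<in> rat_adjoin a"
  obtains q :: "nat \<Rightarrow> rat" where "x = (\<Sum>i<degree P. of_rat (q i) * a ^ i)"
proof -
  obtain p where "x = poly (map_poly of_rat p) a"
    using rat_adjoin_subset_rat_poly_values[OF assms(1,2)] assms(3) by blast
  also have "\<dots> = poly (map_poly of_rat (p div P * P + p mod P)) a" by simp
  also have "\<dots> = poly (map_poly of_rat (p mod P)) a"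
    using assms(2) by (simp only: of_rat_poly.hom_add of_rat_poly.hom_mult poly_add poly_mult) simp
  also have "\<dots> = (\<Sum>i\<le>degree (p mod P). of_rat (coeff (p mod P) i) * a ^ i)"
    by (simp add: poly_altdef)
  also have "\<dots> = (\<Sum>i<degree P. of_rat (coeff (p mod P) i) * a ^ i)"
  proof (rule sum.mono_neutral_left)
    have "degree P \<noteq> 0"
      using assms(1,2) by (auto elim!: degree_eq_zeroE simp: hom_distribs)
    then show "{..degree (p mod P)} \<subseteq> {..<degree P}"
      using degree_mod_less'[of P p] assms(1) by (cases "p mod P = 0") auto
  qed (auto simp: coeff_eq_0)
  finally show ?thesis by (rule that)
qed

lemma rat_common_denominator:
  fixes q :: "nat \<Rightarrow> rat"
  obtains d :: int and c :: "nat \<Rightarrow> int"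
  where "d > 0" "\<And>i. i < n \<Longrightarrow> q i = of_int (c i) / of_int d"
proof -
  define num where "num i = fst (quotient_of (q i))" for i
  define den where "den i = snd (quotient_of (q i))" for i
  define d where "d = (\<Prod>i<n. den i)"
  have den_pos: "den i > 0" for i unfolding den_def by (rule quotient_of_denom_pos')
  then have "d > 0" unfolding d_def by (simp add: prod_pos)
  moreover have "q i = of_int (num i * (d div den i)) / of_int d" if "i < n" for i
  proof -
    have "den i dvd d" unfolding d_def using that by (intro dvd_prodI) auto
    then obtain e where e: "d = den i * e" by (elim dvdE)
    then have "e \<noteq> 0" using \<open>d > 0\<close> by auto
    have "q i = of_int (num i) / of_int (den i)"
      unfolding num_def den_def by (simp add: quotient_of_div)
    also have "\<dots> = of_int (num i * (d div den i)) / of_int d"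
      using den_pos[of i] \<open>e \<noteq> 0\<close> unfolding e by simp
    finally show ?thesis .
  qed
  ultimately show ?thesis by (rule that)
qed

lemma rat_adjoin_radical_coordinates:
  fixes \<alpha> :: complex
  assumes "n > 0" "\<alpha> ^ n = of_int m" "x \<in> rat_adjoin \<alpha>"
  obtains d :: int and c :: "nat \<Rightarrow> int"
  where "d > 0" "x = (\<Sum>i<n. (of_int (c i) / of_int d) * \<alpha> ^ i)"
proof -
  define P :: "rat poly" where "P = monom 1 n + [:- of_int m:]"
  have "degree P = n"
    unfolding P_def using assms(1) by (subst degree_add_eq_left) (simp_all add: degree_monom_eq)
  moreover have "P \<noteq> 0" using calculation assms(1) by auto
  moreover have "poly (map_poly of_rat P) \<alpha> = 0"
    using assms(2) by (simp add: P_def hom_distribs poly_monom)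
  ultimately obtain q where x: "x = (\<Sum>i<n. of_rat (q i) * \<alpha> ^ i)"
    using rat_adjoin_coordinates assms(3) by metis
  obtain d c where "d > 0" and q: "\<And>i. i < n \<Longrightarrow> q i = of_int (c i) / of_int d"
    using rat_common_denominator[of n q] by blast
  have "x = (\<Sum>i<n. (of_int (c i) / of_int d) * \<alpha> ^ i)"
    unfolding x by (intro sum.cong) (simp_all add: q of_rat_divide)
  with \<open>d > 0\<close> show ?thesis by (rule that)
qed

lemma algebraic_int_if_power_eq_of_int:
  fixes \<alpha> :: "'a::field_char_0"
  assumes "n > 0" "\<alpha> ^ n = of_int m"
  shows "algebraic_int \<alpha>"
  by (rule algebraic_int_root[of "of_int m" "monom 1 n"])
    (use assms in \<open>simp_all add: poly_monom degree_monom_eq\<close>)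

lemma prime_dvd_if_power_dvd:
  fixes p c m :: int
  assumes "prime p" "p dvd m" "squarefree m" "n > 0" "p ^ n dvd c ^ n * m ^ (n - 1)"
  shows "p dvd c"
proof -
  obtain m' where m: "m = p * m'" using assms(2) by (elim dvdE)
  have "\<not> p dvd m'"
  proof
    assume "p dvd m'"
    then have "p\<^sup>2 dvd m" unfolding m by (simp add: power2_eq_square)
    then show False using assms(1,3) squarefreeD not_prime_unit by blast
  qed
  have pn: "p ^ n = p ^ (n - 1) * p" using assms(4) by (cases n) simp_all
  have cm: "c ^ n * m ^ (n - 1) = p ^ (n - 1) * (c ^ n * m' ^ (n - 1))"
    unfolding m by (simp add: power_mult_distrib)
  from assms(5) have "p ^ (n - 1) * p dvd p ^ (n - 1) * (c ^ n * m' ^ (n - 1))"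
    unfolding pn cm .
  then have "p dvd c ^ n * m' ^ (n - 1)"
    using assms(1) by (simp add: dvd_times_left_cancel_iff)
  then show ?thesis
    using assms(1) \<open>\<not> p dvd m'\<close> by (auto simp: prime_dvd_mult_iff dest: prime_dvd_power)
qed

lemma prime_dvd_if_algebraic_int_quotient:
  fixes \<alpha> :: "'a::field_char_0"
  assumes "prime p" "p dvd m" "squarefree m" "n > 0" "\<alpha> ^ n = of_int m"
    and "algebraic_int (of_int c / of_int p * \<alpha> ^ (n - 1))"
  shows "p dvd c"
proof -
  have "(of_int c / of_int p * \<alpha> ^ (n - 1)) ^ n = (of_int c / of_int p) ^ n * (\<alpha> ^ n) ^ (n - 1)"
    unfolding power_mult_distrib by (simp only: power_mult[symmetric] mult.commute)
  also have "\<dots> = of_int (c ^ n * m ^ (n - 1)) / of_int (p ^ n)"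
    by (simp add: assms(5) power_divide)
  finally have t: "(of_int c / of_int p * \<alpha> ^ (n - 1)) ^ n = \<dots>" .
  then have "(of_int c / of_int p * \<alpha> ^ (n - 1)) ^ n \<in> \<int>"
    using assms(6) by (intro rational_algebraic_int_is_int algebraic_int_power) simp_all
  then obtain k where "of_int (c ^ n * m ^ (n - 1)) / of_int (p ^ n) = (of_int k :: 'a)"
    unfolding t by (elim Ints_cases)
  then have "(of_int (c ^ n * m ^ (n - 1)) :: 'a) = of_int (k * p ^ n)"
    using assms(1) by (simp add: divide_eq_eq)
  then have "c ^ n * m ^ (n - 1) = k * p ^ n" by (simp only: of_int_eq_iff)
  then show ?thesis
    using assms(1-4) by (intro prime_dvd_if_power_dvd[of p m n c]) simp_all
qed

lemma prime_dvd_coordinates: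
  fixes \<alpha> y :: "'a::field_char_0"
  assumes p: "prime p" "p dvd m" and "squarefree m" "n > 0" and \<alpha>: "\<alpha> ^ n = of_int m"
    and y: "algebraic_int y" "y = (\<Sum>i<n. (of_int (c i) / of_int p) * \<alpha> ^ i)"
    and "j < n"
  shows "p dvd c j"
  using \<open>j < n\<close>
proof (induction j rule: less_induct)
  case (less j)
  have "algebraic_int \<alpha>" using \<open>n > 0\<close> \<alpha> by (rule algebraic_int_if_power_eq_of_int)
  obtain m' where m: "m = p * m'" using p(2) by (elim dvdE)
  have "p \<noteq> 0" using p(1) by auto
  define T where "T i = of_int (c i) / of_int p * \<alpha> ^ (i + (n - 1 - j))" for i
  have T_int: "algebraic_int (T i)" if "i < n" "i \<noteq> j" for i
  proof (cases "i < j")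
    case True
    then obtain k where "c i = p * k" using less.IH \<open>i < n\<close> by (blast elim: dvdE)
    then have "T i = of_int k * \<alpha> ^ (i + (n - 1 - j))" using \<open>p \<noteq> 0\<close> by (simp add: T_def)
    then show ?thesis using \<open>algebraic_int \<alpha>\<close> by auto
  next
    case False
    then have "i + (n - 1 - j) = n + (i - 1 - j)" using that less.prems by simp
    then have "T i = of_int (c i * m') * \<alpha> ^ (i - 1 - j)"
      using \<open>p \<noteq> 0\<close> by (simp add: T_def power_add \<alpha> m)
    then show ?thesis using \<open>algebraic_int \<alpha>\<close> by auto
  qed
  have "y * \<alpha> ^ (n - 1 - j) = (\<Sum>i<n. T i)"
    unfolding y(2) T_def sum_distrib_right by (simp add: power_add mult.assoc)
  then have "T j = y * \<alpha> ^ (n - 1 - j) - (\<Sum>i\<in>{..<n} - {j}. T i)"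
    using less.prems by (simp add: sum.remove)
  moreover have "algebraic_int (\<Sum>i\<in>{..<n} - {j}. T i)"
    using T_int by (intro algebraic_int_sum) auto
  ultimately have "algebraic_int (T j)"
    using y(1) \<open>algebraic_int \<alpha>\<close> by auto
  moreover have "T j = of_int (c j) / of_int p * \<alpha> ^ (n - 1)"
    using less.prems by (simp add: T_def)
  ultimately show "p dvd c j"
    using prime_dvd_if_algebraic_int_quotient[OF p \<open>squarefree m\<close> \<open>n > 0\<close> \<alpha>] by simp
qed

lemma coprime_denominator_exists:
  fixes \<alpha> x :: "'a::field_char_0"
  assumes "squarefree m" "n > 0" "\<alpha> ^ n = of_int m" "algebraic_int x"
    and "d > 0" "x = (\<Sum>i<n. (of_int (c i) / of_int d) * \<alpha> ^ i)"
  shows "\<exists>d' c'. d' > 0 \<and> coprime d' m \<and> x = (\<Sum>i<n. (of_int (c' i) / of_int d') * \<alpha> ^ i)"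
  using assms(5,6)
proof (induction "nat d" arbitrary: d c rule: less_induct)
  case less
  show ?case
  proof (cases "coprime d m")
    case True
    with less.prems show ?thesis by blast
  next
    case False
    then obtain g where "g dvd d" "g dvd m" "\<not> is_unit g" by (elim not_coprimeE)
    moreover have "g \<noteq> 0" using \<open>g dvd d\<close> less.prems(1) by auto
    ultimately obtain p where p: "prime p" "p dvd d" "p dvd m"
      using prime_divisor_exists[of g] by (auto intro: dvd_trans)
    then obtain e where d: "d = p * e" by (elim dvdE)
    have "p > 1" using p(1) by (rule prime_gt_1_int)
    then have "e > 0" "e < d"
      using less.prems(1) unfolding d by (simp_all add: zero_less_mult_iff)
    have ex: "of_int e * x = (\<Sum>i<n. (of_int (c i) / of_int p) * \<alpha> ^ i)"
      using \<open>p > 1\<close> \<open>e > 0\<close> unfolding less.prems(2) d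
      by (simp add: sum_distrib_left)
    have "algebraic_int (of_int e * x)" using assms(4) by auto
    then have dvd: "p dvd c i" if "i < n" for i
      using prime_dvd_coordinates[OF p(1,3) assms(1-3) _ ex that] by blast
    have "x = (\<Sum>i<n. (of_int (c i div p) / of_int e) * \<alpha> ^ i)"
      unfolding less.prems(2)
    proof (rule sum.cong)
      fix i assume "i \<in> {..<n}"
      then obtain k where "c i = p * k" using dvd by (blast elim: dvdE)
      then show "of_int (c i) / of_int d * \<alpha> ^ i = of_int (c i div p) / of_int e * \<alpha> ^ i"
        using \<open>p > 1\<close> unfolding d by simp
    qed simp
    with \<open>e > 0\<close> \<open>e < d\<close> show ?thesis by (intro less.hyps[of e]) auto
  qed
qed

theorem corollary2p2:
  fixes n :: nat and m :: int and \<alpha> :: complex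
  assumes "n \<ge> 2" and "squarefree m" and "m \<noteq> 1" and "m \<noteq> -1"
    and "\<alpha> ^ n = of_int m"
  shows "\<forall>x \<in> rat_adjoin \<alpha>. algebraic_int x \<longrightarrow>
           (\<exists>d :: int. d > 0 \<and> gcd d m = 1 \<and>
              (\<exists>c :: nat \<Rightarrow> int. x = (\<Sum>i<n. (of_int (c i) / of_int d) * \<alpha> ^ i)))"
proof (intro ballI impI)
  \<comment> \<open>\<open>m \<noteq> \<plusminus>1\<close> and \<open>n \<ge> 2\<close> (beyond \<open>n > 0\<close>) are unused: they only make the powers of \<open>\<alpha>\<close>
    a basis, whereas the existence of coordinates needs no uniqueness.\<close>
  fix x assume "x \<in> rat_adjoin \<alpha>" "algebraic_int x"
  have "n > 0" using assms(1) by simp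
  obtain d c where "d > 0" "x = (\<Sum>i<n. (of_int (c i) / of_int d) * \<alpha> ^ i)"
    using rat_adjoin_radical_coordinates[OF \<open>n > 0\<close> assms(5) \<open>x \<in> rat_adjoin \<alpha>\<close>] by blast
  then obtain d' c' where "d' > 0" "coprime d' m"
    "x = (\<Sum>i<n. (of_int (c' i) / of_int d') * \<alpha> ^ i)"
    using coprime_denominator_exists[OF assms(2) \<open>n > 0\<close> assms(5) \<open>algebraic_int x\<close>] by blast
  then show "\<exists>d. d > 0 \<and> gcd d m = 1 \<and> (\<exists>c. x = (\<Sum>i<n. (of_int (c i) / of_int d) * \<alpha> ^ i))"
    by (auto simp: coprime_iff_gcd_eq_1)
qed

end
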